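(* Let $G=(V,E,\gamma,c)$ be a typed DAG task with $M_s\ge1$ cores of each type $s\in S$, and let $\pi=(\tau_1,\dots,\tau_k)$ be a complete path of $G$. Define $\delta(\tau_i,s)$, $\varphi(\tau_i)$ and $\mathcal{R}(\tau_i)$ as in the context. Then \[ \mathcal{R}(\tau_k)=len(\pi)+\sum_{s\in S}\sum_{v\in\mathrm{ivs}(\pi,s)}\frac{c(v)}{M_s}. \]
   Context: A typed DAG task is $G=(V,E,\gamma,c)$ where $(V,E)$ is a finite directed acyclic graph with a unique source $v_{src}$ and a unique sink $v_{snk}$, $S$ is a finite set of core types, $\gamma:V\to S$ gives the type of each vertex, and $c:V\to\mathbb{R}_{\ge0}$ gives the WCET of each vertex. A complete path is a path from $v_{src}$ to $v_{snk}$; $len(\pi)=\sum_{u\in\pi}c(u)$. $\mathrm{ans}(u)$, $\mathrm{des}(u)$ denote ancestors and descendants of $u$. For $v\in V$, $\mathrm{par}(v)=\{u\in V: u\ne v,\ \gamma(u)=\gamma(v),\ u\notin \mathrm{ans}(v)\cup\mathrm{des}(v)\}$, and $\mathrm{par}(\bot)=\emptyset$. For a path $\pi=(\tau_1,\dots,\tau_k)$ and $s\in S$, $\mathrm{ivs}(\pi,s)=\bigcup_{i:\gamma(\tau_i)=s}\mathrm{par}(\tau_i)$. For $s\in S$: $\delta(\tau_i,s)=\tau_i$ if $\gamma(\tau_i)=s$; $\delta(\tau_1,s)=\bot$ if $\gamma(\tau_1)\ne s$; $\delta(\tau_i,s)=\delta(\tau_{i-1},s)$ if $\gamma(\tau_i)\ne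 s$ and $2\le i\le k$ (so $\delta(\tau_i,s)$ is the last vertex of type $s$ among $\tau_1,\dots,\tau_i$, or $\bot$ if none). For $2\le i\le k$, $\varphi(\tau_i)=\mathrm{par}(\tau_i)\setminus\mathrm{par}(\delta(\tau_{i-1},\gamma(\tau_i)))$. Finally $\mathcal{R}(\tau_1)=c(\tau_1)$ and, for $2\le i\le k$, $\mathcal{R}(\tau_i)=\mathcal{R}(\tau_{i-1})+c(\tau_i)+\sum_{v\in\varphi(\tau_i)}c(v)/M_{\gamma(\tau_i)}$. *)

theory Defs
  imports Complex_Main
begin

definition typed_dag_task ::
  "'v set \<Rightarrow> ('v \<times> 'v) set \<Rightarrow> 's set \<Rightarrow> ('v \<Rightarrow> 's) \<Rightarrow> ('v \<Rightarrow> real) \<Rightarrow> 'v \<Rightarrow> 'v \<Rightarrow> bool" where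
  "typed_dag_task V E S \<gamma> c src snk \<longleftrightarrow>
     finite V \<and> finite S \<and> E \<subseteq> V \<times> V \<and> acyclic E \<and>
     (\<forall>v\<in>V. \<gamma> v \<in> S) \<and> (\<forall>v\<in>V. c v \<ge> 0) \<and>
     src \<in> V \<and> snk \<in> V \<and>
     (\<forall>v\<in>V. (\<nexists>u. (u, v) \<in> E) \<longleftrightarrow> v = src) \<and>
     (\<forall>v\<in>V. (\<nexists>w. (v, w) \<in> E) \<longleftrightarrow> v = snk)"

definition complete_path :: "('v \<times> 'v) set \<Rightarrow> 'v \<Rightarrow> 'v \<Rightarrow> 'v list \<Rightarrow> bool" where
  "complete_path E src snk \<pi> \<longleftrightarrow>
     \<pi> \<noteq> [] \<and> hd \<pi> = src \<and> last \<pi> = snk \<and>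
     (\<forall>i. Suc i < length \<pi> \<longrightarrow> (\<pi> ! i, \<pi> ! Suc i) \<in> E)"

definition path_len :: "('v \<Rightarrow> real) \<Rightarrow> 'v list \<Rightarrow> real" where
  "path_len c \<pi> = sum_list (map c \<pi>)"

text \<open>ans(v) = {u. (u,v) \<in> E^+}, des(v) = {u. (v,u) \<in> E^+}.\<close>
definition par :: "'v set \<Rightarrow> ('v \<times> 'v) set \<Rightarrow> ('v \<Rightarrow> 's) \<Rightarrow> 'v \<Rightarrow> 'v set" where
  "par V E \<gamma> v = {u \<in> V. u \<noteq> v \<and> \<gamma> u = \<gamma> v \<and> (u, v) \<notin> E\<^sup>+ \<and> (v, u) \<notin> E\<^sup>+}"

fun par_opt :: "'v set \<Rightarrow> ('v \<times> 'v) set \<Rightarrow> ('v \<Rightarrow> 's) \<Rightarrow> 'v option \<Rightarrow> 'v set" where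
  "par_opt V E \<gamma> None = {}"
| "par_opt V E \<gamma> (Some v) = par V E \<gamma> v"

definition ivs :: "'v set \<Rightarrow> ('v \<times> 'v) set \<Rightarrow> ('v \<Rightarrow> 's) \<Rightarrow> 'v list \<Rightarrow> 's \<Rightarrow> 'v set" where
  "ivs V E \<gamma> \<pi> s = (\<Union>i \<in> {i. i < length \<pi> \<and> \<gamma> (\<pi> ! i) = s}. par V E \<gamma> (\<pi> ! i))"

text \<open>Indices are 0-based: index i corresponds to tau_(i+1) of the paper.
  delta \<pi> i s = last vertex of type s among \<pi>!0..\<pi>!i, None for bottom.\<close>
fun delta :: "('v \<Rightarrow> 's) \<Rightarrow> 'v list \<Rightarrow> nat \<Rightarrow> 's \<Rightarrow> 'v option" where
  "delta \<gamma> \<pi> 0 s = (if \<gamma> (\<pi> ! 0) = s then Some (\<pi> ! 0) else None)"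
| "delta \<gamma> \<pi> (Suc i) s = (if \<gamma> (\<pi> ! Suc i) = s then Some (\<pi> ! Suc i) else delta \<gamma> \<pi> i s)"

text \<open>phi for 0-based index Suc i (paper's tau_(i+2), i.e. indices 2..k).\<close>
definition phi :: "'v set \<Rightarrow> ('v \<times> 'v) set \<Rightarrow> ('v \<Rightarrow> 's) \<Rightarrow> 'v list \<Rightarrow> nat \<Rightarrow> 'v set" where
  "phi V E \<gamma> \<pi> i = par V E \<gamma> (\<pi> ! i) - par_opt V E \<gamma> (delta \<gamma> \<pi> (i - 1) (\<gamma> (\<pi> ! i)))"

fun R :: "'v set \<Rightarrow> ('v \<times> 'v) set \<Rightarrow> ('v \<Rightarrow> 's) \<Rightarrow> ('v \<Rightarrow> real) \<Rightarrow> ('s \<Rightarrow> nat) \<Rightarrow> 'v list \<Rightarrow> nat \<Rightarrow> real" where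
  "R V E \<gamma> c M \<pi> 0 = c (\<pi> ! 0)"
| "R V E \<gamma> c M \<pi> (Suc i) = R V E \<gamma> c M \<pi> i + c (\<pi> ! Suc i)
      + (\<Sum>v \<in> phi V E \<gamma> \<pi> (Suc i). c v / real (M (\<gamma> (\<pi> ! Suc i))))"

end

theory Submission
  imports Defs
begin

text \<open>Write \<open>I\<^sub>n(s) = ivs((\<tau>\<^sub>1, \<dots>, \<tau>\<^sub>n), s)\<close> for the interfering vertices of type \<open>s\<close>
  collected along a prefix of the path. The recursion for \<open>\<R>\<close> adds, at step \<open>n + 1\<close>, exactly the vertices of
  \<open>par(\<tau>\<^sub>n\<^sub>+\<^sub>1)\<close> that are not yet in \<open>I\<^sub>n(\<gamma>(\<tau>\<^sub>n\<^sub>+\<^sub>1))\<close>: along a path, a vertex parallel to two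
  vertices of equal type is also parallel to every vertex of that type in between, so
  \<open>par(\<tau>\<^sub>n\<^sub>+\<^sub>1) \<inter> I\<^sub>n(s)\<close> is already covered by \<open>par(\<delta>(\<tau>\<^sub>n, s))\<close>. Hence \<open>\<R>(\<tau>\<^sub>n)\<close> is the
  length of the prefix plus the weighted sizes of the \<open>I\<^sub>n(s)\<close>; the induction starts because
  every vertex is a descendant of the source, whose \<open>par\<close> is therefore empty.\<close>

lemma delta_eq_NoneD:
  assumes "delta \<gamma> \<pi> n s = None" "i \<le> n"
  shows "\<gamma> (\<pi> ! i) \<noteq> s"
  using assms by (induction n) (auto simp: le_Suc_eq split: if_splits)

lemma delta_eq_SomeD:
  assumes "delta \<gamma> \<pi> n s = Some v"
  obtains j where "j \<le> n" "v = \<pi> ! j" "\<gamma> (\<pi> ! j) = s"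
    "\<And>i. j < i \<Longrightarrow> i \<le> n \<Longrightarrow> \<gamma> (\<pi> ! i) \<noteq> s"
  using assms
proof (induction n arbitrary: thesis)
  case 0
  then show ?case by (auto split: if_splits)
next
  case (Suc n)
  show ?case
  proof (cases "\<gamma> (\<pi> ! Suc n) = s")
    case True
    with Suc.prems(2) show ?thesis by (intro Suc.prems(1)[of "Suc n"]) auto
  next
    case False
    with Suc.prems(2) have "delta \<gamma> \<pi> n s = Some v" by simp
    then obtain j where "j \<le> n" "v = \<pi> ! j" "\<gamma> (\<pi> ! j) = s"
      and "\<And>i. j < i \<Longrightarrow> i \<le> n \<Longrightarrow> \<gamma> (\<pi> ! i) \<noteq> s"
      using Suc.IH by blast
    with False show ?thesis by (intro Suc.prems(1)[of j]) (auto simp: le_Suc_eq)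
  qed
qed

lemma nth_trancl_if_consecutive_edges:
  assumes edges: "\<And>i. Suc i < length \<pi> \<Longrightarrow> (\<pi> ! i, \<pi> ! Suc i) \<in> E"
    and "i < j" "j < length \<pi>"
  shows "(\<pi> ! i, \<pi> ! j) \<in> E\<^sup>+"
  using assms(2,3)
proof (induction j)
  case (Suc j)
  then have "(\<pi> ! j, \<pi> ! Suc j) \<in> E" by (intro edges)
  with Suc show ?case by (cases "i = j") auto
qed simp

lemma par_inter_par_subset:
  assumes "(a, b) \<in> E\<^sup>+" "(b, d) \<in> E\<^sup>+" "\<gamma> a = \<gamma> b"
  shows "par V E \<gamma> a \<inter> par V E \<gamma> d \<subseteq> par V E \<gamma> b"
proof
  fix x assume x: "x \<in> par V E \<gamma> a \<inter> par V E \<gamma> d"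
  have "(x, b) \<notin> E\<^sup>+"
    using x assms(2) trancl_trans[of x b E d] unfolding par_def by blast
  moreover have "(b, x) \<notin> E\<^sup>+"
    using x assms(1) trancl_trans[of a b E x] unfolding par_def by blast
  ultimately show "x \<in> par V E \<gamma> b"
    using x assms unfolding par_def by auto
qed

lemma par_subset: "par V E \<gamma> v \<subseteq> V"
  unfolding par_def by blast

lemma ivs_subset: "ivs V E \<gamma> \<pi> s \<subseteq> V"
  unfolding ivs_def using par_subset by (intro UN_least)

lemma ivs_Nil [simp]: "ivs V E \<gamma> [] s = {}"
  unfolding ivs_def by simp

lemma ivs_snoc:
  "ivs V E \<gamma> (xs @ [x]) s = ivs V E \<gamma> xs s \<union> (if \<gamma> x = s then par V E \<gamma> x else {})"
  unfolding ivs_def by (auto simp: nth_append less_Suc_eq)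

lemma ivs_take:
  "ivs V E \<gamma> (take m \<pi>) s = (\<Union>i \<in> {i. i < m \<and> i < length \<pi> \<and> \<gamma> (\<pi> ! i) = s}. par V E \<gamma> (\<pi> ! i))"
  unfolding ivs_def by auto

lemma phi_eq_par_diff_ivs_take:
  assumes edges: "\<And>i. Suc i < length \<pi> \<Longrightarrow> (\<pi> ! i, \<pi> ! Suc i) \<in> E"
    and n: "Suc n < length \<pi>"
  shows "phi V E \<gamma> \<pi> (Suc n)
           = par V E \<gamma> (\<pi> ! Suc n) - ivs V E \<gamma> (take (Suc n) \<pi>) (\<gamma> (\<pi> ! Suc n))"
proof (cases "delta \<gamma> \<pi> n (\<gamma> (\<pi> ! Suc n))")
  case None
  then have "ivs V E \<gamma> (take (Suc n) \<pi>) (\<gamma> (\<pi> ! Suc n)) = {}"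
    unfolding ivs_take using delta_eq_NoneD by fastforce
  with None show ?thesis unfolding phi_def by simp
next
  case (Some v)
  let ?t = "\<gamma> (\<pi> ! Suc n)"
  let ?I = "ivs V E \<gamma> (take (Suc n) \<pi>) ?t"
  obtain j where j: "j \<le> n" "v = \<pi> ! j" "\<gamma> (\<pi> ! j) = ?t"
    and latest: "\<And>i. j < i \<Longrightarrow> i \<le> n \<Longrightarrow> \<gamma> (\<pi> ! i) \<noteq> ?t"
    using delta_eq_SomeD[OF Some] by blast
  have "par V E \<gamma> (\<pi> ! Suc n) \<inter> par V E \<gamma> (\<pi> ! i) \<subseteq> par V E \<gamma> (\<pi> ! j)"
    if "i \<le> n" "\<gamma> (\<pi> ! i) = ?t" for i
  proof (cases "i = j")
    case False
    with that latest j have "i < j" by (meson le_less_linear order_le_less)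
    then show ?thesis
      using par_inter_par_subset[of "\<pi> ! i" "\<pi> ! j" E "\<pi> ! Suc n" \<gamma> V]
        nth_trancl_if_consecutive_edges[OF edges] that j n by auto
  qed simp
  then have "par V E \<gamma> (\<pi> ! Suc n) \<inter> ?I \<subseteq> par V E \<gamma> (\<pi> ! j)"
    unfolding ivs_take less_Suc_eq_le by blast
  moreover have "par V E \<gamma> (\<pi> ! j) \<subseteq> ?I"
    unfolding ivs_take using j n by (intro subsetI UN_I[of j]) auto
  ultimately show ?thesis
    using Some j unfolding phi_def by auto
qed

lemma R_eq_path_len_take_plus_ivs_take:
  assumes "finite V" "finite S"
    and edges: "\<And>i. Suc i < length \<pi> \<Longrightarrow> (\<pi> ! i, \<pi> ! Suc i) \<in> E"
    and types: "\<gamma> ` set \<pi> \<subseteq> S"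
    and par_hd: "par V E \<gamma> (\<pi> ! 0) = {}"
    and "n < length \<pi>"
  shows "R V E \<gamma> c M \<pi> n = path_len c (take (Suc n) \<pi>)
           + (\<Sum>s\<in>S. \<Sum>v\<in>ivs V E \<gamma> (take (Suc n) \<pi>) s. c v / real (M s))"
  using \<open>n < length \<pi>\<close>
proof (induction n)
  case 0
  then have "take (Suc 0) \<pi> = [] @ [\<pi> ! 0]" by (cases \<pi>) auto
  then show ?case by (simp only: ivs_snoc par_hd) (simp add: path_len_def)
next
  case (Suc n)
  let ?t = "\<gamma> (\<pi> ! Suc n)" and ?I = "\<lambda>s. ivs V E \<gamma> (take (Suc n) \<pi>) s"
  let ?w = "\<lambda>s v. c v / real (M s)"
  have take: "take (Suc (Suc n)) \<pi> = take (Suc n) \<pi> @ [\<pi> ! Suc n]"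
    using Suc.prems by (simp add: take_Suc_conv_app_nth)
  have fin: "finite (?I s)" for s
    using ivs_subset \<open>finite V\<close> by (rule finite_subset)
  have phi: "phi V E \<gamma> \<pi> (Suc n) = par V E \<gamma> (\<pi> ! Suc n) - ?I ?t"
    using phi_eq_par_diff_ivs_take[OF edges Suc.prems] .
  have step: "(\<Sum>v\<in>ivs V E \<gamma> (take (Suc (Suc n)) \<pi>) s. ?w s v)
      = (\<Sum>v\<in>?I s. ?w s v) + (if s = ?t then \<Sum>v\<in>phi V E \<gamma> \<pi> (Suc n). ?w s v else 0)" for s
  proof -
    have "ivs V E \<gamma> (take (Suc (Suc n)) \<pi>) s
        = ?I s \<union> (if s = ?t then phi V E \<gamma> \<pi> (Suc n) else {})"
      by (auto simp: take ivs_snoc phi)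
    moreover have "finite (phi V E \<gamma> \<pi> (Suc n))"
      unfolding phi using par_subset \<open>finite V\<close> by (meson finite_Diff finite_subset)
    ultimately show ?thesis
      using fin by (simp add: sum.union_disjoint phi)
  qed
  have "?t \<in> S" using types Suc.prems by auto
  then have "(\<Sum>s\<in>S. \<Sum>v\<in>ivs V E \<gamma> (take (Suc (Suc n)) \<pi>) s. ?w s v)
      = (\<Sum>s\<in>S. \<Sum>v\<in>?I s. ?w s v) + (\<Sum>v\<in>phi V E \<gamma> \<pi> (Suc n). ?w ?t v)"
    unfolding step sum.distrib using \<open>finite S\<close> by (simp add: sum.delta')
  with Suc show ?case by (simp add: take path_len_def)
qed

lemma typed_dag_task_reachable_from_src:
  assumes "typed_dag_task V E S \<gamma> c src snk" "v \<in> V" "v \<noteq> src"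
  shows "(src, v) \<in> E\<^sup>+"
proof -
  have "finite E" "acyclic E"
    using assms(1) finite_subset unfolding typed_dag_task_def by blast+
  then have "wf E" by (rule finite_acyclic_wf)
  then show ?thesis
    using assms(2,3)
  proof (induction v rule: wf_induct_rule)
    case (less v)
    then obtain u where u: "(u, v) \<in> E"
      using assms(1) unfolding typed_dag_task_def by blast
    then have "u \<in> V" using assms(1) unfolding typed_dag_task_def by blast
    with less u show ?case by (cases "u = src") (auto intro: trancl_into_trancl)
  qed
qed

lemma typed_dag_task_par_src:
  assumes "typed_dag_task V E S \<gamma> c src snk"
  shows "par V E \<gamma> src = {}"
  using typed_dag_task_reachable_from_src[OF assms] unfolding par_def by auto

lemma complete_path_subset:
  assumes "typed_dag_task V E S \<gamma> c src snk" "complete_path E src snk \<pi>"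
  shows "set \<pi> \<subseteq> V"
proof
  fix v assume "v \<in> set \<pi>"
  then obtain i where i: "i < length \<pi>" "v = \<pi> ! i" by (auto simp: in_set_conv_nth)
  show "v \<in> V"
  proof (cases i)
    case 0
    with assms i show ?thesis unfolding typed_dag_task_def complete_path_def by (auto simp: hd_conv_nth)
  next
    case (Suc j)
    with assms i have "(\<pi> ! j, v) \<in> E" unfolding complete_path_def by auto
    with assms(1) show ?thesis unfolding typed_dag_task_def by blast
  qed
qed

theorem lemma3:
  fixes V :: "'v set" and E :: "('v \<times> 'v) set" and S :: "'s set"
    and \<gamma> :: "'v \<Rightarrow> 's" and c :: "'v \<Rightarrow> real" and M :: "'s \<Rightarrow> nat"
    and src snk :: 'v and \<pi> :: "'v list"
  assumes "typed_dag_task V E S \<gamma> c src snk"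
    and "\<forall>s\<in>S. M s \<ge> 1"
    and "complete_path E src snk \<pi>"
  shows "R V E \<gamma> c M \<pi> (length \<pi> - 1)
           = path_len c \<pi> + (\<Sum>s\<in>S. \<Sum>v\<in>ivs V E \<gamma> \<pi> s. c v / real (M s))"
proof -
  have ne: "\<pi> \<noteq> []" and hd: "\<pi> ! 0 = src"
    and edges: "\<And>i. Suc i < length \<pi> \<Longrightarrow> (\<pi> ! i, \<pi> ! Suc i) \<in> E"
    using assms(3) unfolding complete_path_def by (auto simp: hd_conv_nth)
  have "finite V" "finite S" "\<gamma> ` set \<pi> \<subseteq> S"
    using assms(1) complete_path_subset[OF assms(1,3)] unfolding typed_dag_task_def by auto
  moreover have "par V E \<gamma> (\<pi> ! 0) = {}"
    using typed_dag_task_par_src[OF assms(1)] hd by simp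
  ultimately show ?thesis
    using R_eq_path_len_take_plus_ivs_take[OF _ _ edges, where n = "length \<pi> - 1"] ne by simp
qed

end
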